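(* Let $h$ be the height function of a single-species TASEP with arbitrary initial condition, and let $x(\cdot)$ be a backwards path with respect to $h$ started at some time $t$. Let $t_1<t_2$ in $[0,t]$ and $x_1,x_2\in\mathbb{Z}$, and suppose $x(t_1)\le x_1$ and $x(t_2)\le x_2$. Let $x^{\mathrm{step},r}(\tau)$, $\tau\in[t_1,t_2]$, be the rightmost backwards path with respect to $h^{\mathrm{step}}_{x_1,t_1}$ starting at time $t_2$ from position $x_2$, all processes being coupled by basic coupling. Then $x(\tau)\le x^{\mathrm{step},r}(\tau)$ for all $\tau\in[t_1,t_2]$.
   Context: Single-species TASEP (graphical construction): independent rate-one Poisson processes $\mathcal{P}_z$, $z\in\mathbb{Z}$; at each ring of $\mathcal{P}_z$ (a jump attempt at site $z$) a particle at $z$, if any, jumps to $z+1$ if $z+1$ is empty. Basic coupling: several TASEPs are constructed with the same Poisson processes. A height function $h(j,s)$ of a TASEP satisfies $h(j,s)-h(j-1,s)=1-2\eta_s(j)$ ($\eta_s(j)=1$ iff a particle is at $j$), and each jump of a particle from $j$ to $j+1$ at time $s$ increases $h(j,\cdot)$ by $2$ and leaves all other values unchanged. For $y\in\mathbb{Z}$, $\tau\ge0$, $h^{\mathrm{step}}_{y,\tau}$ denotes the height function of the TASEP started at time $\tau$ from particles on all sites $\le y$ and holes on all sites $>y$, normalised by $h^{\mathrm{step}}_{y,\tau}(j,\tau)=|j-y|$. Backwards path with respect to a height function $h$, started at time $t$ from $x(t)=x$: a piecewise constant path defined going backwards in time; it changes only at times $s$ at which there is a jump attempt at site $x(s)$.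 At such a time: if a jump occurred, i.e. $h(x(s),s)=h(x(s),s^-)+2$, set $x(s^-)=x(s)$; otherwise choose $x(s^-)\in\{x(s)-1,x(s)+1\}$ such that $h(x(s^-),s)=h(x(s),s)-1$. The rightmost (resp. leftmost) backwards path always chooses $x(s)+1$ (resp. $x(s)-1$) when this choice is allowed. *)

theory Defs
  imports Complex_Main
begin

text \<open>A realisation of the Poisson clocks is a family
  P :: int => real set (ring times at each site). We work pathwise under the
  almost-sure properties: ring times are positive, locally finite at each site,
  and different sites never ring simultaneously.\<close>

definition clocks_ok :: "(int \<Rightarrow> real set) \<Rightarrow> bool" where
  "clocks_ok P \<longleftrightarrow>
     (\<forall>z. P z \<subseteq> {0<..}) \<and>
     (\<forall>z a b. finite (P z \<inter> {a..b})) \<and>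
     (\<forall>z w. z \<noteq> w \<longrightarrow> P z \<inter> P w = {})"

text \<open>f is constant equal to v on a left neighbourhood of s (restricted to times
  after the starting time t0): the left limit f(s^-) = v.\<close>
definition left_limit :: "real \<Rightarrow> (real \<Rightarrow> 'a) \<Rightarrow> real \<Rightarrow> 'a \<Rightarrow> bool" where
  "left_limit t0 f s v \<longleftrightarrow> (\<exists>\<epsilon>>0. \<forall>u. s - \<epsilon> < u \<and> u < s \<and> t0 < u \<longrightarrow> f u = v)"

definition leftval :: "real \<Rightarrow> (real \<Rightarrow> 'a) \<Rightarrow> real \<Rightarrow> 'a" where
  "leftval t0 f s = (THE v. left_limit t0 f s v)"

text \<open>h is the height function (h j s = h(j,s)) of a TASEP started at time t0
  (from the arbitrary initial configuration encoded by h(.,t0)) and driven by the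
  clocks P: slopes are +-1 (h(j)-h(j-1) = 1 - 2 eta(j)), h(j,.) is right-continuous
  and piecewise constant, changes only at rings of P j, and at a ring of P j it
  increases by 2 iff a particle jumps from j to j+1, i.e. iff at time s^- site j is
  occupied and site j+1 is empty.\<close>
definition tasep_height :: "(int \<Rightarrow> real set) \<Rightarrow> real \<Rightarrow> (int \<Rightarrow> real \<Rightarrow> int) \<Rightarrow> bool" where
  "tasep_height P t0 h \<longleftrightarrow>
     (\<forall>j s. t0 \<le> s \<longrightarrow> h j s - h (j - 1) s = 1 \<or> h j s - h (j - 1) s = -1) \<and>
     (\<forall>j s. t0 \<le> s \<longrightarrow> (\<exists>\<epsilon>>0. \<forall>u. s \<le> u \<and> u < s + \<epsilon> \<longrightarrow> h j u = h j s)) \<and>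
     (\<forall>j s. t0 < s \<longrightarrow> (\<exists>v. left_limit t0 (h j) s v)) \<and>
     (\<forall>j s. t0 < s \<longrightarrow>
        (let a = leftval t0 (h (j - 1)) s;
             b = leftval t0 (h j) s;
             c = leftval t0 (h (j + 1)) s
         in h j s = (if s \<in> P j \<and> b - a = -1 \<and> c - b = 1 then b + 2 else b)))"

text \<open>The height function of the TASEP started at time tau from step initial
  condition (particles on sites <= y, holes on sites > y).\<close>
definition step_height :: "(int \<Rightarrow> real set) \<Rightarrow> int \<Rightarrow> real \<Rightarrow> (int \<Rightarrow> real \<Rightarrow> int) \<Rightarrow> bool" where
  "step_height P y \<tau> h \<longleftrightarrow> tasep_height P \<tau> h \<and> (\<forall>j. h j \<tau> = \<bar>j - y\<bar>)"

text \<open>Backwards path with respect to h (whose TASEP starts at time t0), started at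
  time t from position x0, defined on [t0,t]. The flag rightmost adds the rule that
  x(s)+1 is chosen whenever allowed.\<close>
definition backwards_path_gen ::
  "bool \<Rightarrow> (int \<Rightarrow> real set) \<Rightarrow> real \<Rightarrow> (int \<Rightarrow> real \<Rightarrow> int) \<Rightarrow> real \<Rightarrow> int \<Rightarrow> (real \<Rightarrow> int) \<Rightarrow> bool" where
  "backwards_path_gen rightmost P t0 h t x0 x \<longleftrightarrow>
     x t = x0 \<and>
     (\<forall>s. t0 \<le> s \<and> s < t \<longrightarrow> (\<exists>\<epsilon>>0. \<forall>u. s \<le> u \<and> u < s + \<epsilon> \<longrightarrow> x u = x s)) \<and>
     (\<forall>s. t0 < s \<and> s \<le> t \<longrightarrow>
        (\<exists>y. left_limit t0 x s y \<and>
           (s \<notin> P (x s) \<longrightarrow> y = x s) \<and>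
           (s \<in> P (x s) \<longrightarrow>
              (if h (x s) s = leftval t0 (h (x s)) s + 2 then y = x s
               else (y = x s - 1 \<or> y = x s + 1) \<and> h y s = h (x s) s - 1 \<and>
                    (rightmost \<and> h (x s + 1) s = h (x s) s - 1 \<longrightarrow> y = x s + 1)))))"

abbreviation backwards_path where "backwards_path \<equiv> backwards_path_gen False"
abbreviation rightmost_backwards_path where "rightmost_backwards_path \<equiv> backwards_path_gen True"

end

(*
  Write eta and eta' for the occupation variables of h and of the step TASEP hs started at time t1.
  Forward in time, the invariant "every particle of eta at a site <= x(s) sits on a particle of eta'"
  holds at t1, because eta' is full left of x1 >= x(t1), and it survives every Poisson ring: under the
  basic coupling both systems see the same ring, and the backwards path moves only where h forces it
  to. Between rings the infinitely many sites left of x(s) cause no trouble, since far to the left eta'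
  is still completely packed.

  Backwards in time from t2, where x(t2) <= x2 = xr(t2), the paths x and xr can only cross at a ring
  at their common site z. There the invariant at time s^- at the sites z and z + 1 leaves x no way to
  step to the right of the rightmost path xr.
*)
theory Submission
  imports Defs
begin

section \<open>Induction along a real interval\<close>

lemma real_interval_induct_forward:
  fixes a b s :: real
  assumes "a \<le> s" "s \<le> b"
    and start: "P a"
    and right: "\<And>s. a \<le> s \<Longrightarrow> s < b \<Longrightarrow> (\<And>u. a \<le> u \<Longrightarrow> u \<le> s \<Longrightarrow> P u) \<Longrightarrow>
                  \<forall>\<^sub>F u in at_right s. P u"
    and left: "\<And>s. a < s \<Longrightarrow> s \<le> b \<Longrightarrow> (\<And>u. a \<le> u \<Longrightarrow> u < s \<Longrightarrow> P u) \<Longrightarrow>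
                 P s"
  shows "P s"
proof -
  define S where "S = {c. c \<le> b \<and> (\<forall>u. a \<le> u \<and> u \<le> c \<longrightarrow> P u)}"
  define c where "c = Sup S"
  have "a \<in> S" using assms(1,2) start unfolding S_def by auto
  have bdd: "bdd_above S" unfolding S_def by (rule bdd_aboveI[of _ b]) auto
  have "a \<le> c" unfolding c_def using \<open>a \<in> S\<close> bdd by (rule cSup_upper)
  have "c \<le> b" unfolding c_def using \<open>a \<in> S\<close> by (intro cSup_least) (auto simp: S_def)
  have below_c: "P u" if u: "a \<le> u" "u < c" for u
  proof -
    obtain d where "d \<in> S" "u < d" using less_cSupD[of S u] \<open>a \<in> S\<close> u(2) unfolding c_def by blast
    then show ?thesis using u(1) unfolding S_def by auto
  qed
  have "P c"
  proof (cases "a < c")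
    case True
    from left[OF True \<open>c \<le> b\<close> below_c] show ?thesis .
  qed (use \<open>a \<le> c\<close> start in simp)
  then have upto_c: "P u" if "a \<le> u" "u \<le> c" for u
  proof (cases "u = c")
    case False
    with that show ?thesis by (intro below_c) auto
  qed simp
  have "c = b"
  proof (rule ccontr)
    assume "c \<noteq> b"
    with \<open>c \<le> b\<close> have "c < b" by simp
    from right[OF \<open>a \<le> c\<close> this upto_c] obtain d where "c < d" and d: "\<And>u. c < u \<Longrightarrow> u < d \<Longrightarrow> P u"
      unfolding eventually_at_right_field by blast
    define e where "e = min ((c + d) / 2) b"
    have "c < e" "e \<le> b" using \<open>c < d\<close> \<open>c < b\<close> unfolding e_def by auto
    have "P u" if "a \<le> u" "u \<le> e" for u
    proof (cases "u \<le> c")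
      case True
      with that show ?thesis by (intro upto_c)
    next
      case False
      with that \<open>c < d\<close> show ?thesis unfolding e_def by (intro d) auto
    qed
    then have "e \<in> S" using \<open>e \<le> b\<close> unfolding S_def by auto
    then have "e \<le> c" unfolding c_def using bdd by (rule cSup_upper)
    with \<open>c < e\<close> show False by simp
  qed
  with upto_c assms(1,2) show ?thesis by simp
qed

lemma real_interval_induct_backward:
  fixes a b s :: real
  assumes "a \<le> s" "s \<le> b"
    and start: "P b"
    and left: "\<And>s. a < s \<Longrightarrow> s \<le> b \<Longrightarrow> (\<And>u. s \<le> u \<Longrightarrow> u \<le> b \<Longrightarrow> P u) \<Longrightarrow>
                 \<forall>\<^sub>F u in at_left s. P u"
    and right: "\<And>s. a \<le> s \<Longrightarrow> s < b \<Longrightarrow> (\<And>u. s < u \<Longrightarrow> u \<le> b \<Longrightarrow> P u) \<Longrightarrow>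
                  P s"
  shows "P s"
proof -
  have "P (- (- s))"
  proof (rule real_interval_induct_forward[where P = "\<lambda>v. P (- v)"])
    show "- b \<le> - s" "- s \<le> - a" "P (- (- b))" using assms(1-3) by simp_all
  next
    fix v assume "- b \<le> v" "v < - a" and IH: "\<And>u. - b \<le> u \<Longrightarrow> u \<le> v \<Longrightarrow> P (- u)"
    have "\<forall>\<^sub>F u in at_left (- v). P u"
    proof (rule left)
      show "a < - v" "- v \<le> b" using \<open>- b \<le> v\<close> \<open>v < - a\<close> by simp_all
    next
      show "P u" if "- v \<le> u" "u \<le> b" for u using IH[of "- u"] that by simp
    qed
    then show "\<forall>\<^sub>F u in at_right v. P (- u)"
      unfolding at_left_minus[of "- v"] by (simp add: eventually_filtermap)
  next
    fix v assume "- b < v" "v \<le> - a" and IH: "\<And>u. - b \<le> u \<Longrightarrow> u < v \<Longrightarrow> P (- u)"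
    show "P (- v)"
    proof (rule right)
      show "a \<le> - v" "- v < b" using \<open>- b < v\<close> \<open>v \<le> - a\<close> by simp_all
    next
      show "P u" if "- v < u" "u \<le> b" for u using IH[of "- u"] that by simp
    qed
  qed
  then show ?thesis by simp
qed

section \<open>Height profiles at a ring\<close>

definition unit_slopes :: "(int \<Rightarrow> int) \<Rightarrow> bool" where
  "unit_slopes f \<longleftrightarrow> (\<forall>j. f j - f (j - 1) = 1 \<or> f j - f (j - 1) = -1)"

lemma unit_slopes_plus_index_mono:
  assumes "unit_slopes f" "i \<le> j"
  shows "f i + i \<le> f j + j"
  using assms(2)
proof (induction j rule: int_ge_induct)
  case (step k)
  have "f (k + 1) - f (k + 1 - 1) = 1 \<or> f (k + 1) - f (k + 1 - 1) = -1"
    using assms(1) unfolding unit_slopes_def by blast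
  with step.IH show ?case by auto
qed simp

(* Since h(j) - h(j-1) = 1 - 2 eta(j), this says eta(j) = 1. *)
definition occupied :: "(int \<Rightarrow> int) \<Rightarrow> int \<Rightarrow> bool" where
  "occupied f j \<longleftrightarrow> f j - f (j - 1) = -1"

lemma occupied_left_of_minimum:
  assumes "unit_slopes f" and lower: "\<And>i. i \<le> a \<Longrightarrow> c \<le> f i + i"
    and "f m + m \<le> c" "j \<le> m" "m \<le> a"
  shows "occupied f j"
proof -
  have "f j + j \<le> f (j - 1) + (j - 1)"
    using unit_slopes_plus_index_mono[OF assms(1) \<open>j \<le> m\<close>] \<open>f m + m \<le> c\<close> lower[of "j - 1"] assms(4,5)
    by linarith
  moreover have "f j - f (j - 1) = 1 \<or> f j - f (j - 1) = -1"
    using assms(1) unfolding unit_slopes_def by blast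
  ultimately show ?thesis unfolding occupied_def by auto
qed

definition particles_dominated :: "(int \<Rightarrow> int) \<Rightarrow> (int \<Rightarrow> int) \<Rightarrow> int \<Rightarrow> bool" where
  "particles_dominated f g y \<longleftrightarrow> (\<forall>j \<le> y. occupied f j \<longrightarrow> occupied g j)"

(* The profile at a time s computed from the profile f at s^-, as in tasep_height. *)
definition tasep_update :: "(int \<Rightarrow> bool) \<Rightarrow> (int \<Rightarrow> int) \<Rightarrow> int \<Rightarrow> int" where
  "tasep_update ring f j =
     (if ring j \<and> f j - f (j - 1) = -1 \<and> f (j + 1) - f j = 1 then f j + 2 else f j)"

lemma tasep_update_no_ring [simp]: "\<not> R j \<Longrightarrow> tasep_update R f j = f j"
  unfolding tasep_update_def by simp

lemma tasep_update_ge: "f j \<le> tasep_update R f j"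
  unfolding tasep_update_def by simp

lemma tasep_update_jump:
  "tasep_update R f j = f j + 2 \<Longrightarrow> occupied f j \<and> f (j + 1) - f j = 1"
  unfolding tasep_update_def occupied_def by (simp split: if_splits)

lemma tasep_update_no_jump: "tasep_update R f j \<noteq> f j + 2 \<Longrightarrow> tasep_update R f j = f j"
  unfolding tasep_update_def by (simp split: if_splits)

(* The rule of backwards_path_gen for the step from x = x(s) back to y = x(s^-). *)
definition backwards_choice ::
  "bool \<Rightarrow> bool \<Rightarrow> (int \<Rightarrow> int) \<Rightarrow> (int \<Rightarrow> int) \<Rightarrow> int \<Rightarrow> int \<Rightarrow> bool" where
  "backwards_choice rightmost ring before after x y \<longleftrightarrow>
     (if ring \<and> after x \<noteq> before x + 2
      then (y = x - 1 \<or> y = x + 1) \<and> after y = after x - 1 \<and>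
           (rightmost \<and> after (x + 1) = after x - 1 \<longrightarrow> y = x + 1)
      else y = x)"

lemma backwards_choice_no_ring: "backwards_choice r False before after x y \<Longrightarrow> y = x"
  unfolding backwards_choice_def by simp

lemma backwards_choice_range:
  "backwards_choice r ring before after x y \<Longrightarrow> x - 1 \<le> y \<and> y \<le> x + 1"
  unfolding backwards_choice_def by (auto split: if_splits)

lemma particles_dominated_tasep_update:
  assumes ring: "\<And>a b. R a \<Longrightarrow> R b \<Longrightarrow> a = b"
    and slopes: "unit_slopes f" "unit_slopes g"
    and choice: "backwards_choice r (R x) f (tasep_update R f) x y"
    and dom: "particles_dominated f g y"
  shows "particles_dominated (tasep_update R f) (tasep_update R g) x"
  unfolding particles_dominated_def
proof (intro allI impI)
  fix j assume "j \<le> x" and occ: "occupied (tasep_update R f) j"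
  have sl: "f k - f (k - 1) \<in> {-1, 1}" "g k - g (k - 1) \<in> {-1, 1}" for k
    using slopes unfolding unit_slopes_def by auto
  have dom': "occupied f k \<Longrightarrow> k \<le> y \<Longrightarrow> occupied g k" for k
    using dom unfolding particles_dominated_def by blast
  have y_no_ring: "\<not> R x \<Longrightarrow> y = x"
    using choice backwards_choice_no_ring by force
  have "x - 1 \<le> y" using backwards_choice_range[OF choice] by simp
  consider "R j" | "R (j - 1)" | "\<not> R j" "\<not> R (j - 1)" by blast
  then show "occupied (tasep_update R g) j"
  proof cases
    case 1
    then have no_ring: "\<not> R (j - 1)" "\<not> R (j + 1)" using ring[of "j - 1" j] ring[of "j + 1" j] by auto
    have f_stays: "tasep_update R f j = f j"
      using occ no_ring(1) unfolding occupied_def tasep_update_def by (auto split: if_split_asm)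
    have occ_f: "occupied f j" "occupied f (j + 1)"
      using occ f_stays no_ring 1 sl[of "j + 1"] unfolding occupied_def tasep_update_def
      by (auto split: if_split_asm)
    have "j + 1 \<le> y"
    proof (cases "x = j")
      case True
      then have "y = j - 1 \<or> y = j + 1" "tasep_update R f y = f j - 1"
        using choice f_stays 1 unfolding backwards_choice_def by auto
      then show ?thesis using occ_f(1) no_ring(1) unfolding occupied_def by auto
    next
      case False
      then show ?thesis using y_no_ring ring[OF 1, of x] \<open>j \<le> x\<close> by force
    qed
    then have "occupied g j" "occupied g (j + 1)" using dom' occ_f by auto
    then show ?thesis using no_ring(1) unfolding occupied_def tasep_update_def by simp
  next
    case 2
    then have no_ring: "\<not> R j" using ring[of j "j - 1"] by auto
    have "j \<le> y" using y_no_ring ring[OF 2, of x] \<open>j \<le> x\<close> by force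
    then have "occupied g j" if "occupied f j" using dom' that by simp
    moreover have "occupied g (j - 1)" if "occupied f (j - 1)" using dom' that \<open>j \<le> y\<close> by simp
    ultimately show ?thesis
      using occ no_ring 2 sl[of j] unfolding occupied_def tasep_update_def by (auto split: if_splits)
  next
    case 3
    have "j \<le> y" using y_no_ring \<open>x - 1 \<le> y\<close> \<open>j \<le> x\<close> 3 by (cases "x = j") auto
    then show ?thesis using occ 3 dom'[of j] unfolding occupied_def by simp
  qed
qed

lemma backwards_choice_le_rightmost:
  assumes ring: "\<And>a b. R a \<Longrightarrow> R b \<Longrightarrow> a = b"
    and slopes: "unit_slopes f" "unit_slopes g"
    and "x \<le> x'"
    and choice: "backwards_choice r (R x) f (tasep_update R f) x y"
    and choice': "backwards_choice True (R x') g (tasep_update R g) x' y'"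
    and dom: "particles_dominated f g y"
  shows "y \<le> y'"
proof -
  have range: "x - 1 \<le> y" "y \<le> x + 1" "x' - 1 \<le> y'"
    using backwards_choice_range[OF choice] backwards_choice_range[OF choice'] by auto
  have stay: "\<not> R x \<Longrightarrow> y = x" "\<not> R x' \<Longrightarrow> y' = x'"
    using choice choice' backwards_choice_no_ring by force+
  consider "x \<noteq> x' \<or> \<not> R x" | "x = x'" "R x" by blast
  then show ?thesis
  proof cases
    case 1
    show ?thesis
    proof (cases "R x")
      case True
      then have "\<not> R x'" using 1 ring[of x x'] by auto
      then show ?thesis using stay(2) range(2) 1 True \<open>x \<le> x'\<close> by auto
    next
      case False
      then show ?thesis using stay range(3) \<open>x \<le> x'\<close> by (cases "x = x'") auto
    qed
  next
    case 2
    define z where "z = x"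
    have z: "x = z" "x' = z" "R z" using 2 z_def by auto
    have no_ring: "\<not> R (z - 1)" "\<not> R (z + 1)" using ring[of "z - 1" z] ring[of "z + 1" z] z by auto
    have sl: "f k - f (k - 1) \<in> {-1, 1}" "g k - g (k - 1) \<in> {-1, 1}" for k
      using slopes unfolding unit_slopes_def by auto
    have dom': "occupied f k \<Longrightarrow> k \<le> y \<Longrightarrow> occupied g k" for k
      using dom unfolding particles_dominated_def by blast
    show ?thesis
    proof (rule ccontr)
      assume "\<not> y \<le> y'"
      then consider "y = z + 1" "y' \<le> z" | "y = z" "y' = z - 1" using range z by linarith
      then show False
      proof cases
        case 1
        have "occupied f (z + 1)"
          using choice z no_ring 1 tasep_update_no_jump[of R f z]
          unfolding backwards_choice_def occupied_def by (auto split: if_splits)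
        moreover have "\<not> occupied g (z + 1)"
          using choice' z no_ring 1 sl[of "z + 1"] tasep_update_no_jump[of R g z] tasep_update_jump[of R g z]
          unfolding backwards_choice_def occupied_def by (auto split: if_splits)
        ultimately show False using dom' 1 by auto
      next
        case 2
        have "occupied f z"
          using choice z 2 tasep_update_jump[of R f z] unfolding backwards_choice_def by (auto split: if_splits)
        moreover have "\<not> occupied g z"
          using choice' z no_ring 2 tasep_update_no_jump[of R g z]
          unfolding backwards_choice_def occupied_def by (auto split: if_splits)
        ultimately show False using dom' 2 by auto
      qed
    qed
  qed
qed

section \<open>TASEP height functions and backwards paths\<close>

lemma left_limit_eventually:
  assumes "left_limit t0 f s v" "t0 < s"
  shows "\<forall>\<^sub>F u in at_left s. f u = v"
proof -
  obtain e where "e > 0" "\<And>u. s - e < u \<Longrightarrow> u < s \<Longrightarrow> t0 < u \<Longrightarrow> f u = v"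
    using assms(1) unfolding left_limit_def by blast
  then show ?thesis unfolding eventually_at_left_field
    using assms(2) by (intro exI[of _ "max (s - e) t0"]) auto
qed

lemma leftval_eqI:
  assumes "left_limit t0 f s v" "t0 < s"
  shows "leftval t0 f s = v"
  unfolding leftval_def
proof (rule the_equality)
  fix w assume "left_limit t0 f s w"
  from left_limit_eventually[OF this assms(2)] left_limit_eventually[OF assms]
  have "\<forall>\<^sub>F u in at_left s. w = v" by eventually_elim simp
  then show "w = v" by simp
qed (fact assms(1))

abbreviation left_profile :: "real \<Rightarrow> (int \<Rightarrow> real \<Rightarrow> int) \<Rightarrow> real \<Rightarrow> int \<Rightarrow> int" where
  "left_profile t0 h s \<equiv> \<lambda>j. leftval t0 (h j) s"

lemma tasep_height_unit_slopes:
  assumes "tasep_height P t0 h" "t0 \<le> s"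
  shows "unit_slopes (\<lambda>j. h j s)"
proof -
  have "\<forall>j s. t0 \<le> s \<longrightarrow> h j s - h (j - 1) s = 1 \<or> h j s - h (j - 1) s = -1"
    using assms(1) unfolding tasep_height_def by (rule conjunct1)
  then show ?thesis using assms(2) unfolding unit_slopes_def by simp
qed

lemma tasep_height_eventually_right:
  assumes "tasep_height P t0 h" "t0 \<le> s"
  shows "\<forall>\<^sub>F u in at_right s. h j u = h j s"
proof -
  have "\<forall>j s. t0 \<le> s \<longrightarrow> (\<exists>\<epsilon>>0. \<forall>u. s \<le> u \<and> u < s + \<epsilon> \<longrightarrow> h j u = h j s)"
    using assms(1) unfolding tasep_height_def by (elim conjE)
  from this[rule_format, OF assms(2), of j] obtain e
    where "e > 0" and e: "\<forall>u. s \<le> u \<and> u < s + e \<longrightarrow> h j u = h j s"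
    by blast
  show ?thesis unfolding eventually_at_right_field
  proof (intro exI conjI allI impI)
    show "s < s + e" using \<open>e > 0\<close> by simp
    fix u assume "s < u" "u < s + e"
    then show "h j u = h j s" using e less_imp_le by blast
  qed
qed

lemma tasep_height_eventually_left:
  assumes "tasep_height P t0 h" "t0 < s"
  shows "\<forall>\<^sub>F u in at_left s. h j u = leftval t0 (h j) s"
proof -
  obtain v where "left_limit t0 (h j) s v" using assms unfolding tasep_height_def by blast
  moreover from this assms(2) have "leftval t0 (h j) s = v" by (rule leftval_eqI)
  ultimately show ?thesis using left_limit_eventually[OF _ assms(2)] by simp
qed

lemma tasep_height_left_unit_slopes:
  assumes "tasep_height P t0 h" "t0 < s"
  shows "unit_slopes (left_profile t0 h s)"
  unfolding unit_slopes_def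
proof
  fix j
  have "\<forall>\<^sub>F u in at_left s. h j u = leftval t0 (h j) s \<and> h (j - 1) u = leftval t0 (h (j - 1)) s \<and> t0 < u"
    using tasep_height_eventually_left[OF assms] eventually_at_left_real[OF assms(2)]
    by (intro eventually_conj) (auto elim: eventually_mono)
  then obtain u where "h j u = leftval t0 (h j) s" "h (j - 1) u = leftval t0 (h (j - 1)) s" "t0 < u"
    using eventually_happens'[OF trivial_limit_at_left_real] by blast
  with tasep_height_unit_slopes[OF assms(1), of u]
  show "leftval t0 (h j) s - leftval t0 (h (j - 1)) s = 1 \<or> leftval t0 (h j) s - leftval t0 (h (j - 1)) s = -1"
    unfolding unit_slopes_def by (metis less_imp_le)
qed

lemma tasep_height_update:
  assumes "tasep_height P t0 h" "t0 < s"
  shows "(\<lambda>j. h j s) = tasep_update (\<lambda>j. s \<in> P j) (left_profile t0 h s)"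
proof
  fix j
  have "h j s = (if s \<in> P j \<and> leftval t0 (h j) s - leftval t0 (h (j - 1)) s = -1 \<and>
                      leftval t0 (h (j + 1)) s - leftval t0 (h j) s = 1
                   then leftval t0 (h j) s + 2 else leftval t0 (h j) s)"
    using assms unfolding tasep_height_def Let_def by blast
  then show "h j s = tasep_update (\<lambda>j. s \<in> P j) (left_profile t0 h s) j"
    unfolding tasep_update_def by simp
qed

lemma tasep_height_mono:
  assumes th: "tasep_height P t0 h" and "t0 \<le> v" "v \<le> w"
  shows "h j v \<le> h j w"
  using \<open>v \<le> w\<close> order.refl
proof (rule real_interval_induct_forward[where P = "\<lambda>u. h j v \<le> h j u"])
  show "h j v \<le> h j v" by simp
next
  fix s assume "v \<le> s" and IH: "\<And>u. v \<le> u \<Longrightarrow> u \<le> s \<Longrightarrow> h j v \<le> h j u"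
  have "h j v \<le> h j s" using IH[of s] \<open>v \<le> s\<close> by simp
  with tasep_height_eventually_right[OF th, of s j] \<open>t0 \<le> v\<close> \<open>v \<le> s\<close>
  show "\<forall>\<^sub>F u in at_right s. h j v \<le> h j u" by (auto elim: eventually_mono)
next
  fix s assume "v < s" and IH: "\<And>u. v \<le> u \<Longrightarrow> u < s \<Longrightarrow> h j v \<le> h j u"
  have "t0 < s" using \<open>t0 \<le> v\<close> \<open>v < s\<close> by simp
  have "\<forall>\<^sub>F u in at_left s. h j u = leftval t0 (h j) s \<and> v < u \<and> u < s"
    using tasep_height_eventually_left[OF th \<open>t0 < s\<close>] eventually_at_left_real[OF \<open>v < s\<close>]
    by (intro eventually_conj) (auto elim: eventually_mono)
  then obtain u where "h j u = leftval t0 (h j) s" "v < u" "u < s"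
    using eventually_happens'[OF trivial_limit_at_left_real] by blast
  moreover have "leftval t0 (h j) s \<le> h j s"
    using fun_cong[OF tasep_height_update[OF th \<open>t0 < s\<close>], of j] tasep_update_ge by simp
  ultimately show "h j v \<le> h j s" using IH[of u] by simp
qed

lemma clocks_ok_single_ring: "clocks_ok P \<Longrightarrow> s \<in> P a \<Longrightarrow> s \<in> P b \<Longrightarrow> a = b"
  unfolding clocks_ok_def by blast

lemma backwards_path_eventually_right:
  assumes "backwards_path_gen r P t0 h t x0 x" "t0 \<le> s" "s < t"
  shows "\<forall>\<^sub>F u in at_right s. x u = x s"
proof -
  have "\<forall>s. t0 \<le> s \<and> s < t \<longrightarrow> (\<exists>\<epsilon>>0. \<forall>u. s \<le> u \<and> u < s + \<epsilon> \<longrightarrow> x u = x s)"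
    using assms(1) unfolding backwards_path_gen_def by (elim conjE)
  with assms(2,3) obtain e where "e > 0" and e: "\<forall>u. s \<le> u \<and> u < s + e \<longrightarrow> x u = x s"
    by blast
  show ?thesis unfolding eventually_at_right_field
  proof (intro exI conjI allI impI)
    show "s < s + e" using \<open>e > 0\<close> by simp
    fix u assume "s < u" "u < s + e"
    then show "x u = x s" using e less_imp_le by blast
  qed
qed

lemma backwards_path_left_limit:
  assumes "backwards_path_gen r P t0 h t x0 x" "tasep_height P t0 h" "t0 < s" "s \<le> t"
  obtains y where "\<forall>\<^sub>F u in at_left s. x u = y"
    and "backwards_choice r (s \<in> P (x s)) (left_profile t0 h s)
           (tasep_update (\<lambda>j. s \<in> P j) (left_profile t0 h s)) (x s) y"
proof -
  obtain y where "left_limit t0 x s y"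
    and "backwards_choice r (s \<in> P (x s)) (left_profile t0 h s) (\<lambda>j. h j s) (x s) y"
    using assms(1,3,4) unfolding backwards_path_gen_def backwards_choice_def by (auto split: if_splits)
  then show thesis
    using that[OF left_limit_eventually[OF \<open>left_limit t0 x s y\<close> assms(3)]]
      tasep_height_update[OF assms(2,3)] by simp
qed

section \<open>Comparison with the step TASEP\<close>

lemma step_height_eventually_packed:
  assumes "step_height P y \<tau> hs" "\<tau> \<le> s"
  obtains m where "\<forall>\<^sub>F u in at_right s. \<forall>j \<le> m. occupied (\<lambda>k. hs k u) j"
proof -
  have th: "tasep_height P \<tau> hs" and init: "\<And>j. hs j \<tau> = \<bar>j - y\<bar>"
    using assms(1) unfolding step_height_def by auto
  have lower: "y \<le> hs j s + j" if "j \<le> y" for j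
    using tasep_height_mono[OF th order.refl assms(2), of j] init[of j] that by simp
  obtain m where "m \<le> y" and least: "\<And>j. j \<le> y \<Longrightarrow> nat (hs m s + m - y) \<le> nat (hs j s + j - y)"
    using ex_has_least_nat[of "\<lambda>j. j \<le> y" y "\<lambda>j. nat (hs j s + j - y)"] by auto
  have min: "hs m s + m \<le> hs j s + j" if "j \<le> y" for j
    using least[OF that] lower[OF that] lower[OF \<open>m \<le> y\<close>] by (simp add: nat_le_eq_zle)
  have "\<forall>\<^sub>F u in at_right s. hs m u = hs m s \<and> s < u"
    using tasep_height_eventually_right[OF th assms(2)] eventually_at_right_less by (rule eventually_conj)
  then have "\<forall>\<^sub>F u in at_right s. \<forall>j \<le> m. occupied (\<lambda>k. hs k u) j"
  proof (rule eventually_mono, intro allI impI)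
    fix u j assume u: "hs m u = hs m s \<and> s < u" and "j \<le> m"
    show "occupied (\<lambda>k. hs k u) j"
    proof (rule occupied_left_of_minimum[where a = y and c = "hs m s + m" and m = m])
      show "unit_slopes (\<lambda>k. hs k u)" using tasep_height_unit_slopes[OF th] assms(2) u by simp
      show "hs m s + m \<le> hs i u + i" if "i \<le> y" for i
        using min[OF that] tasep_height_mono[OF th assms(2), of u i] u by simp
    qed (use u \<open>j \<le> m\<close> \<open>m \<le> y\<close> in auto)
  qed
  then show thesis by (rule that)
qed

lemma particles_dominated_left_profiles:
  assumes th: "tasep_height P t0 h" and th': "tasep_height P t1 h'" and "t0 < s" "t1 < s"
    and "\<forall>\<^sub>F u in at_left s. x u = y"
    and dom: "\<And>u. t1 < u \<Longrightarrow> u < s \<Longrightarrow> particles_dominated (\<lambda>j. h j u) (\<lambda>j. h' j u) (x u)"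
  shows "particles_dominated (left_profile t0 h s) (left_profile t1 h' s) y"
  unfolding particles_dominated_def
proof (intro allI impI)
  fix j assume "j \<le> y" and occ: "occupied (left_profile t0 h s) j"
  have "\<forall>\<^sub>F u in at_left s. (x u = y \<and> t1 < u \<and> u < s) \<and>
      (h j u = leftval t0 (h j) s \<and> h (j - 1) u = leftval t0 (h (j - 1)) s) \<and>
      (h' j u = leftval t1 (h' j) s \<and> h' (j - 1) u = leftval t1 (h' (j - 1)) s)"
    using assms(5) eventually_at_left_real[OF assms(4)]
      tasep_height_eventually_left[OF th assms(3)] tasep_height_eventually_left[OF th' assms(4)]
    by (intro eventually_conj) (auto elim: eventually_mono)
  then obtain u where "x u = y" "t1 < u" "u < s"
    and "h j u = leftval t0 (h j) s" "h (j - 1) u = leftval t0 (h (j - 1)) s"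
    and "h' j u = leftval t1 (h' j) s" "h' (j - 1) u = leftval t1 (h' (j - 1)) s"
    using eventually_happens'[OF trivial_limit_at_left_real] by blast
  with dom[of u] \<open>j \<le> y\<close> occ show "occupied (left_profile t1 h' s) j"
    unfolding particles_dominated_def occupied_def by auto
qed

lemma particles_dominated_right_continuation:
  assumes th: "tasep_height P t0 h" and th': "tasep_height P t1 h'"
    and bp: "backwards_path_gen r P t0 h t x0 x" and "t0 \<le> s" "t1 \<le> s" "s < t"
    and packed: "\<forall>\<^sub>F u in at_right s. \<forall>j \<le> m. occupied (\<lambda>k. h' k u) j"
    and dom: "particles_dominated (\<lambda>j. h j s) (\<lambda>j. h' j s) (x s)"
  shows "\<forall>\<^sub>F u in at_right s. particles_dominated (\<lambda>j. h j u) (\<lambda>j. h' j u) (x u)"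
proof -
  have "\<forall>\<^sub>F u in at_right s. x u = x s \<and> (\<forall>k \<in> {m..x s}. h k u = h k s \<and> h' k u = h' k s)"
    using backwards_path_eventually_right[OF bp \<open>t0 \<le> s\<close> \<open>s < t\<close>]
      tasep_height_eventually_right[OF th \<open>t0 \<le> s\<close>] tasep_height_eventually_right[OF th' \<open>t1 \<le> s\<close>]
    by (intro eventually_conj eventually_ball_finite) (auto intro: eventually_conj)
  with packed show ?thesis
  proof eventually_elim
    case (elim u)
    show ?case unfolding particles_dominated_def
    proof (intro allI impI)
      fix j assume "j \<le> x u" and occ: "occupied (\<lambda>j. h j u) j"
      show "occupied (\<lambda>j. h' j u) j"
      proof (cases "j \<le> m")
        case False
        then have "j \<in> {m..x s}" "j - 1 \<in> {m..x s}" using \<open>j \<le> x u\<close> elim by auto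
        then show ?thesis
          using elim dom occ \<open>j \<le> x u\<close> unfolding particles_dominated_def occupied_def by auto
      qed (use elim in blast)
    qed
  qed
qed

lemma particles_dominated_through_ring:
  assumes ck: "clocks_ok P" and th: "tasep_height P t0 h" and th': "tasep_height P t1 h'"
    and bp: "backwards_path_gen r P t0 h t x0 x" and "t0 < s" "t1 < s" "s \<le> t"
    and dom: "\<And>u. t1 < u \<Longrightarrow> u < s \<Longrightarrow> particles_dominated (\<lambda>j. h j u) (\<lambda>j. h' j u) (x u)"
  shows "particles_dominated (\<lambda>j. h j s) (\<lambda>j. h' j s) (x s)"
proof -
  obtain y where ev: "\<forall>\<^sub>F u in at_left s. x u = y"
    and choice: "backwards_choice r (s \<in> P (x s)) (left_profile t0 h s)
                   (tasep_update (\<lambda>j. s \<in> P j) (left_profile t0 h s)) (x s) y"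
    using backwards_path_left_limit[OF bp th \<open>t0 < s\<close> \<open>s \<le> t\<close>] by blast
  have "particles_dominated (left_profile t0 h s) (left_profile t1 h' s) y"
    using particles_dominated_left_profiles[OF th th' \<open>t0 < s\<close> \<open>t1 < s\<close> ev dom] .
  then have "particles_dominated (tasep_update (\<lambda>j. s \<in> P j) (left_profile t0 h s))
               (tasep_update (\<lambda>j. s \<in> P j) (left_profile t1 h' s)) (x s)"
    using particles_dominated_tasep_update[OF clocks_ok_single_ring[OF ck, of s]
        tasep_height_left_unit_slopes[OF th \<open>t0 < s\<close>] tasep_height_left_unit_slopes[OF th' \<open>t1 < s\<close>] choice]
    by blast
  then show ?thesis
    using tasep_height_update[OF th \<open>t0 < s\<close>] tasep_height_update[OF th' \<open>t1 < s\<close>] by simp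
qed

lemma particles_dominated_along_backwards_path:
  assumes ck: "clocks_ok P" and th: "tasep_height P t0 h" and bp: "backwards_path_gen r P t0 h t x0 x"
    and "t0 \<le> t1" "x t1 \<le> y" and sh: "step_height P y t1 hs"
    and "t1 \<le> w" "w \<le> t"
  shows "particles_dominated (\<lambda>j. h j w) (\<lambda>j. hs j w) (x w)"
proof -
  have ths: "tasep_height P t1 hs" and init: "\<And>j. hs j t1 = \<bar>j - y\<bar>"
    using sh unfolding step_height_def by auto
  show ?thesis
    using \<open>t1 \<le> w\<close> \<open>w \<le> t\<close>
  proof (rule real_interval_induct_forward[where P = "\<lambda>w. particles_dominated (\<lambda>j. h j w) (\<lambda>j. hs j w) (x w)"])
    show "particles_dominated (\<lambda>j. h j t1) (\<lambda>j. hs j t1) (x t1)"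
      using \<open>x t1 \<le> y\<close> init unfolding particles_dominated_def occupied_def by auto
  next
    fix s assume "t1 \<le> s" "s < t"
      and IH: "\<And>u. t1 \<le> u \<Longrightarrow> u \<le> s \<Longrightarrow> particles_dominated (\<lambda>j. h j u) (\<lambda>j. hs j u) (x u)"
    obtain m where "\<forall>\<^sub>F u in at_right s. \<forall>j \<le> m. occupied (\<lambda>k. hs k u) j"
      using step_height_eventually_packed[OF sh \<open>t1 \<le> s\<close>] by blast
    from particles_dominated_right_continuation[OF th ths bp _ \<open>t1 \<le> s\<close> \<open>s < t\<close> this IH[of s]]
    show "\<forall>\<^sub>F u in at_right s. particles_dominated (\<lambda>j. h j u) (\<lambda>j. hs j u) (x u)"
      using \<open>t0 \<le> t1\<close> \<open>t1 \<le> s\<close> by simp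
  next
    fix s assume "t1 < s" "s \<le> t"
      and IH: "\<And>u. t1 \<le> u \<Longrightarrow> u < s \<Longrightarrow> particles_dominated (\<lambda>j. h j u) (\<lambda>j. hs j u) (x u)"
    show "particles_dominated (\<lambda>j. h j s) (\<lambda>j. hs j s) (x s)"
      using particles_dominated_through_ring[OF ck th ths bp _ \<open>t1 < s\<close> \<open>s \<le> t\<close>] IH \<open>t0 \<le> t1\<close> \<open>t1 < s\<close>
      by simp
  qed
qed

lemma backwards_path_left_limit_le_rightmost:
  assumes ck: "clocks_ok P" and th: "tasep_height P t0 h" and th': "tasep_height P t1 h'"
    and bp: "backwards_path_gen r P t0 h t x0 x" and rbp: "rightmost_backwards_path P t1 h' t' x0' xr"
    and "t0 < s" "t1 < s" "s \<le> t" "s \<le> t'" and "x s \<le> xr s"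
    and dom: "\<And>u. t1 < u \<Longrightarrow> u < s \<Longrightarrow> particles_dominated (\<lambda>j. h j u) (\<lambda>j. h' j u) (x u)"
  shows "\<forall>\<^sub>F u in at_left s. x u \<le> xr u"
proof -
  obtain y where ev: "\<forall>\<^sub>F u in at_left s. x u = y"
    and choice: "backwards_choice r (s \<in> P (x s)) (left_profile t0 h s)
                   (tasep_update (\<lambda>j. s \<in> P j) (left_profile t0 h s)) (x s) y"
    using backwards_path_left_limit[OF bp th \<open>t0 < s\<close> \<open>s \<le> t\<close>] by blast
  obtain y' where ev': "\<forall>\<^sub>F u in at_left s. xr u = y'"
    and choice': "backwards_choice True (s \<in> P (xr s)) (left_profile t1 h' s)
                    (tasep_update (\<lambda>j. s \<in> P j) (left_profile t1 h' s)) (xr s) y'"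
    using backwards_path_left_limit[OF rbp th' \<open>t1 < s\<close> \<open>s \<le> t'\<close>] by blast
  have "y \<le> y'"
    using backwards_choice_le_rightmost[OF clocks_ok_single_ring[OF ck, of s]
        tasep_height_left_unit_slopes[OF th \<open>t0 < s\<close>] tasep_height_left_unit_slopes[OF th' \<open>t1 < s\<close>]
        \<open>x s \<le> xr s\<close> choice choice' particles_dominated_left_profiles[OF th th' \<open>t0 < s\<close> \<open>t1 < s\<close> ev dom]] .
  from ev ev' show ?thesis by eventually_elim (use \<open>y \<le> y'\<close> in simp)
qed

lemma backwards_path_le_rightmost:
  assumes ck: "clocks_ok P" and th: "tasep_height P t0 h" and th': "tasep_height P t1 h'"
    and bp: "backwards_path_gen r P t0 h t x0 x" and rbp: "rightmost_backwards_path P t1 h' t2 x2 xr"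
    and "t0 \<le> t1" "t2 \<le> t" "x t2 \<le> x2"
    and dom: "\<And>w. t1 \<le> w \<Longrightarrow> w \<le> t2 \<Longrightarrow> particles_dominated (\<lambda>j. h j w) (\<lambda>j. h' j w) (x w)"
    and "t1 \<le> \<tau>" "\<tau> \<le> t2"
  shows "x \<tau> \<le> xr \<tau>"
  using \<open>t1 \<le> \<tau>\<close> \<open>\<tau> \<le> t2\<close>
proof (rule real_interval_induct_backward[where P = "\<lambda>\<tau>. x \<tau> \<le> xr \<tau>"])
  show "x t2 \<le> xr t2" using \<open>x t2 \<le> x2\<close> rbp unfolding backwards_path_gen_def by simp
next
  fix s assume "t1 < s" "s \<le> t2" and IH: "\<And>u. s \<le> u \<Longrightarrow> u \<le> t2 \<Longrightarrow> x u \<le> xr u"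
  show "\<forall>\<^sub>F u in at_left s. x u \<le> xr u"
    using backwards_path_left_limit_le_rightmost[OF ck th th' bp rbp _ \<open>t1 < s\<close> _ \<open>s \<le> t2\<close> IH[of s]]
      dom \<open>t0 \<le> t1\<close> \<open>t1 < s\<close> \<open>s \<le> t2\<close> \<open>t2 \<le> t\<close> by simp
next
  fix s assume "t1 \<le> s" "s < t2" and IH: "\<And>u. s < u \<Longrightarrow> u \<le> t2 \<Longrightarrow> x u \<le> xr u"
  have "\<forall>\<^sub>F u in at_right s. x u = x s \<and> xr u = xr s \<and> s < u \<and> u < t2"
    using backwards_path_eventually_right[OF bp] backwards_path_eventually_right[OF rbp]
      eventually_at_right_real[OF \<open>s < t2\<close>] \<open>t0 \<le> t1\<close> \<open>t1 \<le> s\<close> \<open>s < t2\<close> \<open>t2 \<le> t\<close>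
    by (intro eventually_conj) (auto elim: eventually_mono)
  then obtain u where "x u = x s" "xr u = xr s" "s < u" "u < t2"
    using eventually_happens'[OF trivial_limit_at_right_real] by blast
  with IH[of u] show "x s \<le> xr s" by simp
qed

theorem proposition2p1:
  fixes P :: "int \<Rightarrow> real set"
    and h hs :: "int \<Rightarrow> real \<Rightarrow> int"
    and x xr :: "real \<Rightarrow> int"
    and t t1 t2 :: real and x0 x1 x2 :: int
  assumes "clocks_ok P"
    and "tasep_height P 0 h"
    and "backwards_path P 0 h t x0 x"
    and "0 \<le> t1" and "t1 < t2" and "t2 \<le> t"
    and "x t1 \<le> x1" and "x t2 \<le> x2"
    and "step_height P x1 t1 hs"
    and "rightmost_backwards_path P t1 hs t2 x2 xr"
  shows "\<forall>\<tau>. t1 \<le> \<tau> \<and> \<tau> \<le> t2 \<longrightarrow> x \<tau> \<le> xr \<tau>"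
proof (intro allI impI)
  fix \<tau> assume "t1 \<le> \<tau> \<and> \<tau> \<le> t2"
  have "tasep_height P t1 hs" using assms(9) unfolding step_height_def by simp
  moreover have "particles_dominated (\<lambda>j. h j w) (\<lambda>j. hs j w) (x w)" if "t1 \<le> w" "w \<le> t2" for w
    using particles_dominated_along_backwards_path[OF assms(1-4,7,9)] that assms(6) by simp
  ultimately show "x \<tau> \<le> xr \<tau>"
    using backwards_path_le_rightmost[OF assms(1,2) _ assms(3,10,4,6,8)] \<open>t1 \<le> \<tau> \<and> \<tau> \<le> t2\<close>
    by blast
qed

end
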